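(* $\displaystyle\int_0^1 R(x)\,dx=\frac{3}{7}.$
   Context: Define $\rho$ on binary words: for $b=b_1b_2\dots$, $\rho(b)$ is obtained by deleting every digit $b_n=0$ and replacing every $b_n=1$ by $0$ if $n$ is odd and by $1$ if $n$ is even. For $x\in(0,1]$ let $\beta(x)$ be the unique binary expansion of $x$ with infinitely many $1$'s. Define $R:[0,1]\to[0,1]$ by $R(0)=2/3$ and, for $x\in(0,1]$, $R(x)=\sum_{n\ge1}c_n2^{-n}$ where $c=\rho(\beta(x))$. *)

theory Defs
  imports "HOL-Analysis.Analysis" "HOL-Library.Infinite_Set"
begin

text \<open>Binary words are infinite sequences of digits, indexed from 0:
  the digit b k corresponds to the paper's b_(k+1) (weight 2^-(k+1)).
  Thus the paper's position n = k+1 is even iff k is odd.\<close>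

definition digit :: "bool \<Rightarrow> real" where
  "digit d = (if d then 1 else 0)"

definition beta :: "real \<Rightarrow> (nat \<Rightarrow> bool)" where
  "beta x = (THE b. infinite {k. b k} \<and> (\<lambda>k. digit (b k) / 2 ^ Suc k) sums x)"

text \<open>rho on a word with infinitely many ones: delete the zeros; the m-th one
  (0-based m), sitting at position k (0-based), becomes 1 iff the paper's
  position k+1 is even, i.e. iff k is odd.\<close>
definition rho :: "(nat \<Rightarrow> bool) \<Rightarrow> (nat \<Rightarrow> bool)" where
  "rho b = (\<lambda>m. odd (enumerate {k. b k} m))"

definition R :: "real \<Rightarrow> real" where
  "R x = (if x = 0 then 2/3
          else (\<Sum>m. digit (rho (beta x) m) / 2 ^ Suc m))"

end

theory Submission
  imports Defs
begin

text \<open>Let \<open>R_xor q\<close> be \<open>R\<close> with every output digit flipped when \<open>q\<close> holds.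
  On \<open>(0, 1/2]\<close> the expansion \<open>beta x\<close> is a 0 followed by \<open>beta (2x)\<close>, which shifts every 1
  to the next position and so flips every digit of \<open>rho\<close>; on \<open>(1/2, 1]\<close> it is a 1 followed by
  \<open>beta (2x - 1)\<close>, which moreover emits a leading output digit 0. Hence the pair \<open>R_xor\<close> is a
  fixed point of the operator \<open>self_similar_step\<close>, which forces the integrals to satisfy
  \<open>I q = 3/4 I (\<not> q) + q/4\<close>, i.e. \<open>I False = 3/7\<close> and \<open>I True = 4/7\<close>. Integrability
  comes from squeezing \<open>R_xor\<close> between the iterates of the operator on the constants 0 and 1,
  whose integrals converge to these values at rate \<open>(3/4)^n\<close>.\<close>

definition binary_series :: "(nat \<Rightarrow> bool) \<Rightarrow> nat \<Rightarrow> real" where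
  "binary_series b k = digit (b k) / 2 ^ Suc k"

lemma summable_binary_series: "summable (binary_series b)"
proof (rule summable_comparison_test)
  show "summable (\<lambda>k. (1/2::real) ^ Suc k)" by simp
  show "\<exists>N. \<forall>k\<ge>N. norm (binary_series b k) \<le> (1/2) ^ Suc k"
    by (auto simp: binary_series_def digit_def power_one_over)
qed

lemma suminf_binary_series_nonneg: "0 \<le> suminf (binary_series b)"
  by (intro suminf_nonneg summable_binary_series) (simp add: binary_series_def digit_def)

lemma suminf_binary_series_le_1: "suminf (binary_series b) \<le> 1"
proof -
  have "summable (\<lambda>k. (1/2::real) ^ Suc k)" by simp
  then have "suminf (binary_series b) \<le> (\<Sum>k. (1/2::real) ^ Suc k)"
    by (intro suminf_le summable_binary_series)
       (simp_all add: binary_series_def digit_def power_one_over)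
  also have "\<dots> = 1"
    using suminf_mult[of "\<lambda>k. (1/2::real) ^ k" "1/2"] by (simp add: suminf_geometric)
  finally show ?thesis .
qed

lemma suminf_binary_series_pos: "b j \<Longrightarrow> 0 < suminf (binary_series b)"
  by (subst suminf_pos_iff[OF summable_binary_series])
     (auto simp: binary_series_def digit_def intro!: exI[of _ j])

lemma binary_series_case_nat_sums:
  assumes "binary_series b sums s"
  shows "binary_series (case_nat d b) sums ((digit d + s) / 2)"
proof -
  have "(\<lambda>k. binary_series b k / 2) sums (s / 2)"
    using sums_divide[OF assms] .
  then have "(\<lambda>k. binary_series (case_nat d b) (Suc k)) sums (s / 2)"
    by (simp add: binary_series_def)
  then have "binary_series (case_nat d b) sums (s / 2 + binary_series (case_nat d b) 0)"
    by (simp only: sums_Suc_iff)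
  then show ?thesis
    by (simp add: binary_series_def add_divide_distrib add.commute)
qed

lemma Collect_case_nat:
  "{k. case_nat d b k} = (if d then insert 0 (Suc ` {k. b k}) else Suc ` {k. b k})"
proof (rule set_eqI)
  show "k \<in> {k. case_nat d b k} \<longleftrightarrow> k \<in> (if d then insert 0 (Suc ` {k. b k}) else Suc ` {k. b k})"
    for k by (cases k) auto
qed

lemma infinite_case_nat_iff: "infinite {k. case_nat d b k} \<longleftrightarrow> infinite {k. b k}"
  by (simp add: Collect_case_nat finite_image_iff)

lemma binary_expansion_head:
  assumes inf: "infinite {k. b k}" and b: "binary_series b sums x"
  shows "b 0 = (x > 1/2)" and "infinite {k. b (Suc k)}"
    and "binary_series (\<lambda>k. b (Suc k)) sums (2 * x - digit (b 0))"
proof -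
  have b_Cons: "b = case_nat (b 0) (\<lambda>k. b (Suc k))"
    by (rule ext) (simp split: nat.split)
  then show tail_inf: "infinite {k. b (Suc k)}"
    using inf infinite_case_nat_iff by metis
  define s where "s = suminf (binary_series (\<lambda>k. b (Suc k)))"
  from b_Cons have "binary_series b sums ((digit (b 0) + s) / 2)"
    using binary_series_case_nat_sums summable_binary_series s_def by (metis summable_sums)
  then have x: "x = (digit (b 0) + s) / 2"
    using b sums_unique2 by blast
  then have "2 * x - digit (b 0) = s" by simp
  then show "binary_series (\<lambda>k. b (Suc k)) sums (2 * x - digit (b 0))"
    using summable_sums[OF summable_binary_series] s_def by simp
  obtain j where "b (Suc j)"
    using tail_inf not_finite_existsD by blast
  then have "0 < s" "s \<le> 1"
    using suminf_binary_series_pos suminf_binary_series_le_1 s_def by auto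
  with x show "b 0 = (x > 1/2)"
    by (cases "b 0") (auto simp: digit_def)
qed

lemma binary_expansion_unique:
  assumes "infinite {k. b k}" "binary_series b sums x"
    and "infinite {k. c k}" "binary_series c sums x"
  shows "b k = c k"
  using assms
proof (induction k arbitrary: b c x)
  case 0
  then show ?case using binary_expansion_head(1) by metis
next
  case (Suc k)
  have "b 0 = c 0"
    using Suc.prems binary_expansion_head(1) by metis
  then show ?case
    using Suc.IH[of "\<lambda>k. b (Suc k)" "2 * x - digit (b 0)" "\<lambda>k. c (Suc k)"]
      binary_expansion_head(2,3)[OF Suc.prems(1,2)] binary_expansion_head(2,3)[OF Suc.prems(3,4)]
    by simp
qed

lemma beta_eqI:
  assumes "infinite {k. b k}" "binary_series b sums x"
  shows "beta x = b"
  unfolding beta_def binary_series_def[symmetric]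
proof (rule the_equality)
  show "infinite {k. b k} \<and> binary_series b sums x" using assms ..
qed (use assms binary_expansion_unique in blast)

definition doubling :: "real \<Rightarrow> real" where
  "doubling x = (if x > 1/2 then 2 * x - 1 else 2 * x)"

definition greedy_digits :: "real \<Rightarrow> nat \<Rightarrow> bool" where
  "greedy_digits x k = ((doubling ^^ k) x > 1/2)"

lemma greedy_digits_Suc: "greedy_digits x (Suc k) = greedy_digits (doubling x) k"
  by (simp add: greedy_digits_def funpow_Suc_right del: funpow.simps)

lemma doubling_iterate_bounds: "0 < x \<Longrightarrow> x \<le> 1 \<Longrightarrow> 0 < (doubling ^^ n) x \<and> (doubling ^^ n) x \<le> 1"
  by (induction n) (auto simp: doubling_def)

lemma greedy_digits_partial_sum:
  "(\<Sum>k<n. binary_series (greedy_digits x) k) = x - (doubling ^^ n) x / 2 ^ n"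
proof (induction n arbitrary: x)
  case 0
  then show ?case by simp
next
  case (Suc n)
  have "(\<Sum>k<Suc n. binary_series (greedy_digits x) k)
      = digit (greedy_digits x 0) / 2 + (\<Sum>k<n. binary_series (greedy_digits (doubling x)) k) / 2"
    by (simp only: sum.lessThan_Suc_shift)
       (simp add: binary_series_def greedy_digits_Suc sum_divide_distrib)
  also have "\<dots> = digit (greedy_digits x 0) / 2 + (doubling x - (doubling ^^ n) (doubling x) / 2 ^ n) / 2"
    by (simp only: Suc.IH)
  also have "\<dots> = x - (doubling ^^ Suc n) x / 2 ^ Suc n"
    by (simp add: funpow_Suc_right greedy_digits_def doubling_def digit_def field_simps
             del: funpow.simps)
  finally show ?case .
qed

lemma greedy_digits_sums:
  assumes "0 < x" "x \<le> 1"
  shows "binary_series (greedy_digits x) sums x"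
proof -
  have "(\<lambda>n. (doubling ^^ n) x / 2 ^ n) \<longlonglongrightarrow> 0"
  proof (rule Lim_null_comparison)
    show "\<forall>\<^sub>F n in sequentially. norm ((doubling ^^ n) x / 2 ^ n) \<le> (1/2) ^ n"
      using doubling_iterate_bounds[OF assms]
      by (intro always_eventually allI) (simp add: power_one_over divide_le_cancel abs_of_pos)
  qed (simp add: LIMSEQ_power_zero)
  then have "(\<lambda>n. x - (doubling ^^ n) x / 2 ^ n) \<longlonglongrightarrow> x"
    using tendsto_diff[OF tendsto_const] by fastforce
  then show ?thesis
    by (simp add: sums_def greedy_digits_partial_sum)
qed

lemma greedy_digits_infinite:
  assumes "0 < x" "x \<le> 1"
  shows "infinite {k. greedy_digits x k}"
proof
  assume "finite {k. greedy_digits x k}"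
  then obtain N where N: "\<And>k. k \<ge> N \<Longrightarrow> \<not> greedy_digits x k"
    by (metis finite_nat_set_iff_bounded_le mem_Collect_eq not_less_eq_eq)
  have grow: "(doubling ^^ (N + j)) x = 2 ^ j * (doubling ^^ N) x" for j
  proof (induction j)
    case (Suc j)
    have "\<not> (doubling ^^ (N + j)) x > 1/2"
      using N[of "N + j"] by (simp add: greedy_digits_def)
    then have "(doubling ^^ (N + Suc j)) x = 2 * (doubling ^^ (N + j)) x"
      by (simp add: doubling_def)
    with Suc.IH show ?case by simp
  qed simp
  obtain j where "1 / (doubling ^^ N) x < 2 ^ j"
    using real_arch_pow[of 2] by auto
  then have "1 < (doubling ^^ (N + j)) x"
    using doubling_iterate_bounds[OF assms, of N] grow by (simp add: divide_less_eq mult.commute)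
  then show False
    using doubling_iterate_bounds[OF assms, of "N + j"] by simp
qed

lemma beta_expansion:
  assumes "0 < x" "x \<le> 1"
  shows "infinite {k. beta x k}" and "binary_series (beta x) sums x"
  using beta_eqI[OF greedy_digits_infinite greedy_digits_sums] assms
    greedy_digits_infinite greedy_digits_sums by auto

lemma beta_lower_half:
  assumes "0 < x" "x \<le> 1/2"
  shows "beta x = case_nat False (beta (2 * x))"
  using assms beta_expansion[of "2 * x"] binary_series_case_nat_sums[of "beta (2 * x)" "2 * x" False]
  by (intro beta_eqI) (simp_all add: infinite_case_nat_iff digit_def)

lemma beta_upper_half:
  assumes "1/2 < x" "x \<le> 1"
  shows "beta x = case_nat True (beta (2 * x - 1))"
  using assms beta_expansion[of "2 * x - 1"] binary_series_case_nat_sums[of "beta (2 * x - 1)" "2 * x - 1" True]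
  by (intro beta_eqI) (simp_all add: infinite_case_nat_iff digit_def)

lemma enumerate_Suc_image_0:
  assumes "S \<noteq> {}"
  shows "enumerate (Suc ` S) 0 = Suc (enumerate S 0)"
  unfolding enumerate_0
proof (rule Least_equality)
  show "Suc (LEAST n. n \<in> S) \<in> Suc ` S"
    using assms by (auto intro: LeastI)
qed (auto intro: Least_le)

lemma enumerate_Suc_image:
  assumes "infinite S"
  shows "enumerate (Suc ` S) m = Suc (enumerate S m)"
  using assms
proof (induction m arbitrary: S)
  case 0
  then show ?case by (intro enumerate_Suc_image_0) auto
next
  case (Suc m)
  then have "enumerate (Suc ` S) 0 = Suc (enumerate S 0)"
    by (intro enumerate_Suc_image_0) auto
  moreover have "Suc ` S - {Suc (enumerate S 0)} = Suc ` (S - {enumerate S 0})" by auto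
  ultimately show ?case
    using Suc.IH[of "S - {enumerate S 0}"] Suc.prems by (simp add: enumerate_Suc')
qed

lemma rho_case_nat_False:
  "infinite {k. b k} \<Longrightarrow> rho (case_nat False b) = (\<lambda>m. \<not> rho b m)"
  by (simp add: rho_def Collect_case_nat enumerate_Suc_image)

lemma rho_case_nat_True:
  assumes "infinite {k. b k}"
  shows "rho (case_nat True b) = case_nat False (\<lambda>m. \<not> rho b m)"
proof (rule ext)
  fix m
  have "insert 0 (Suc ` {k. b k}) - {0} = Suc ` {k. b k}" by auto
  then show "rho (case_nat True b) m = case_nat False (\<lambda>m. \<not> rho b m) m"
    using assms by (cases m) (simp_all add: rho_def Collect_case_nat enumerate_0 enumerate_Suc' enumerate_Suc_image)
qed

lemma suminf_binary_series_case_nat: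
  "suminf (binary_series (case_nat d b)) = (digit d + suminf (binary_series b)) / 2"
  using binary_series_case_nat_sums[OF summable_sums[OF summable_binary_series]] sums_unique by metis

definition R_xor :: "bool \<Rightarrow> real \<Rightarrow> real" where
  "R_xor q x = suminf (binary_series (\<lambda>m. rho (beta x) m \<noteq> q))"

definition self_similar_step :: "(bool \<Rightarrow> real \<Rightarrow> real) \<Rightarrow> bool \<Rightarrow> real \<Rightarrow> real" where
  "self_similar_step g q x =
     (if x \<le> 1/2 then g (\<not> q) (2 * x) else (digit q + g (\<not> q) (2 * x - 1)) / 2)"

lemma R_xor_bounds: "0 \<le> R_xor q x" "R_xor q x \<le> 1"
  unfolding R_xor_def by (rule suminf_binary_series_nonneg, rule suminf_binary_series_le_1)

lemma R_xor_self_similar: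
  assumes "0 < x" "x \<le> 1"
  shows "self_similar_step R_xor q x = R_xor q x"
proof (cases "x \<le> 1/2")
  case True
  then have "rho (beta x) = (\<lambda>m. \<not> rho (beta (2 * x)) m)"
    using assms beta_expansion(1)[of "2 * x"] by (simp add: beta_lower_half rho_case_nat_False)
  with True show ?thesis
    by (simp add: self_similar_step_def R_xor_def)
next
  case False
  then have "rho (beta x) = case_nat False (\<lambda>m. \<not> rho (beta (2 * x - 1)) m)"
    using assms beta_expansion(1)[of "2 * x - 1"] by (simp add: beta_upper_half rho_case_nat_True)
  then have "(\<lambda>m. rho (beta x) m \<noteq> q) = case_nat q (\<lambda>m. rho (beta (2 * x - 1)) m \<noteq> (\<not> q))"
    by (auto split: nat.split)
  with False show ?thesis
    by (simp add: self_similar_step_def R_xor_def suminf_binary_series_case_nat)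
qed

definition self_similar_integral :: "bool \<Rightarrow> real" where
  "self_similar_integral q = (if q then 4/7 else 3/7)"

lemma self_similar_integral_eq:
  "3/4 * self_similar_integral (\<not> q) + digit q / 4 = self_similar_integral q"
  by (simp add: self_similar_integral_def digit_def)

lemma has_integral_self_similar_step:
  assumes g: "\<And>q. (g q has_integral I q) {0..1}"
  shows "(self_similar_step g q has_integral 3/4 * I (\<not> q) + digit q / 4) {0..1}"
proof -
  have affine: "((\<lambda>x. g (\<not> q) (2 * x + c)) has_integral I (\<not> q) / 2) {- c / 2..(1 - c) / 2}" for c
    using has_integral_affinity'[OF g[of "\<not> q", unfolded cbox_interval[symmetric]], of 2 c]
    by (simp add: cbox_interval)
  have left: "((\<lambda>x. g (\<not> q) (2 * x)) has_integral I (\<not> q) / 2) {0..1/2}"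
    using affine[of 0] by simp
  have right: "((\<lambda>x. g (\<not> q) (2 * x - 1)) has_integral I (\<not> q) / 2) {1/2..1}"
    using affine[of "-1"] by simp
  have "(self_similar_step g q has_integral I (\<not> q) / 2) {0..1/2}"
    by (rule has_integral_spike_finite[of "{}", OF _ _ left])
       (auto simp: self_similar_step_def)
  moreover have "(self_similar_step g q has_integral (digit q / 2 + I (\<not> q) / 2) / 2) {1/2..1}"
  proof (rule has_integral_spike_finite[of "{1/2}"])
    show "((\<lambda>x. (digit q + g (\<not> q) (2 * x - 1)) / 2) has_integral (digit q / 2 + I (\<not> q) / 2) / 2) {1/2..1}"
      using has_integral_add[OF has_integral_const_real[of "digit q" "1/2" 1] right]
      by (intro has_integral_divide) (simp add: field_simps)
  qed (auto simp: self_similar_step_def)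
  ultimately have "(self_similar_step g q has_integral I (\<not> q) / 2 + (digit q / 2 + I (\<not> q) / 2) / 2) {0..1}"
    by (intro has_integral_combine) auto
  then show ?thesis
    by (simp add: field_simps)
qed

lemma self_similar_iterate_has_integral:
  assumes "\<And>q. (g q has_integral I q) {0..1}"
    and "\<And>q. \<bar>I q - self_similar_integral q\<bar> \<le> e"
  shows "\<exists>J. \<forall>q. ((self_similar_step ^^ n) g q has_integral J q) {0..1}
              \<and> \<bar>J q - self_similar_integral q\<bar> \<le> (3/4) ^ n * e"
proof (induction n)
  case 0
  then show ?case using assms by auto
next
  case (Suc n)
  then obtain J where J: "\<And>q. ((self_similar_step ^^ n) g q has_integral J q) {0..1}"
      and err: "\<And>q. \<bar>J q - self_similar_integral q\<bar> \<le> (3/4) ^ n * e"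
    by blast
  have "\<bar>(3/4 * J (\<not> q) + digit q / 4) - self_similar_integral q\<bar> \<le> (3/4) ^ Suc n * e" for q
  proof -
    have "\<bar>(3/4 * J (\<not> q) + digit q / 4) - self_similar_integral q\<bar>
        = \<bar>3/4 * (J (\<not> q) - self_similar_integral (\<not> q))\<bar>"
      by (rule arg_cong[where f = abs], subst self_similar_integral_eq[symmetric, of q])
         (simp add: algebra_simps)
    also have "\<dots> = 3/4 * \<bar>J (\<not> q) - self_similar_integral (\<not> q)\<bar>"
      by (simp only: abs_mult abs_numeral abs_divide)
    also have "\<dots> \<le> (3/4) ^ Suc n * e"
      using err[of "\<not> q"] by simp
    finally show ?thesis .
  qed
  moreover have "(self_similar_step ((self_similar_step ^^ n) g) q has_integral
                   3/4 * J (\<not> q) + digit q / 4) {0..1}" for q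
    using has_integral_self_similar_step[OF J] .
  ultimately show ?case
    by (intro exI[of _ "\<lambda>q. 3/4 * J (\<not> q) + digit q / 4"]) simp
qed

lemma self_similar_step_mono:
  assumes "\<And>q y. 0 \<le> y \<Longrightarrow> y \<le> 1 \<Longrightarrow> g q y \<le> h q y" and "0 \<le> x" "x \<le> 1"
  shows "self_similar_step g q x \<le> self_similar_step h q x"
  using assms by (simp add: self_similar_step_def divide_right_mono)

lemma self_similar_iterate_const_at_0: "(self_similar_step ^^ n) (\<lambda>_ _. c) q 0 = c"
  by (induction n arbitrary: q) (simp_all add: self_similar_step_def)

lemma self_similar_fixpoint_bounds:
  assumes fixpoint: "\<And>q x. 0 < x \<Longrightarrow> x \<le> 1 \<Longrightarrow> self_similar_step f q x = f q x"
    and bounded: "\<And>q x. 0 \<le> x \<Longrightarrow> x \<le> 1 \<Longrightarrow> 0 \<le> f q x \<and> f q x \<le> 1"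
    and "0 \<le> x" "x \<le> 1"
  shows "(self_similar_step ^^ n) (\<lambda>_ _. 0) q x \<le> f q x \<and> f q x \<le> (self_similar_step ^^ n) (\<lambda>_ _. 1) q x"
  using assms(3,4)
proof (induction n arbitrary: q x)
  case 0
  then show ?case using bounded by simp
next
  case (Suc n)
  show ?case
  proof (cases "x = 0")
    case True
    then show ?thesis using bounded by (simp add: self_similar_iterate_const_at_0 del: funpow.simps)
  next
    case False
    then have "f q x = self_similar_step f q x"
      using Suc.prems fixpoint by simp
    moreover have "self_similar_step ((self_similar_step ^^ n) (\<lambda>_ _. 0)) q x \<le> self_similar_step f q x"
      by (rule self_similar_step_mono) (use Suc.IH Suc.prems in auto)
    moreover have "self_similar_step f q x \<le> self_similar_step ((self_similar_step ^^ n) (\<lambda>_ _. 1)) q x"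
      by (rule self_similar_step_mono) (use Suc.IH Suc.prems in auto)
    ultimately show ?thesis by simp
  qed
qed

lemma has_integral_squeeze:
  fixes f :: "'a::euclidean_space \<Rightarrow> real"
  assumes "\<And>e. e > 0 \<Longrightarrow> \<exists>g h i j. (g has_integral i) S \<and> (h has_integral j) S
              \<and> \<bar>i - I\<bar> < e \<and> \<bar>j - I\<bar> < e \<and> (\<forall>x\<in>S. g x \<le> f x \<and> f x \<le> h x)"
  shows "(f has_integral I) S"
proof -
  have "f integrable_on S"
  proof (rule integrable_straddle)
    fix e :: real assume "e > 0"
    then obtain g h i j where "(g has_integral i) S" "(h has_integral j) S"
        "\<bar>i - I\<bar> < e / 2" "\<bar>j - I\<bar> < e / 2" "\<forall>x\<in>S. g x \<le> f x \<and> f x \<le> h x"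
      using assms[of "e / 2"] by auto
    moreover from this have "\<bar>i - j\<bar> < e" by linarith
    ultimately show "\<exists>g h i j. (g has_integral i) S \<and> (h has_integral j) S \<and> \<bar>i - j\<bar> < e
                 \<and> (\<forall>x\<in>S. g x \<le> f x \<and> f x \<le> h x)"
      by blast
  qed
  then have f: "(f has_integral integral S f) S" by blast
  have "\<bar>integral S f - I\<bar> < e" if "e > 0" for e
  proof -
    obtain g h i j where "(g has_integral i) S" "(h has_integral j) S"
        "\<bar>i - I\<bar> < e" "\<bar>j - I\<bar> < e" "\<forall>x\<in>S. g x \<le> f x \<and> f x \<le> h x"
      using assms[OF \<open>e > 0\<close>] by auto
    then have "i \<le> integral S f" "integral S f \<le> j"
      using has_integral_le f by blast+
    with \<open>\<bar>i - I\<bar> < e\<close> \<open>\<bar>j - I\<bar> < e\<close> show ?thesis by linarith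
  qed
  then have "integral S f = I"
    by (metis zero_less_abs_iff less_irrefl right_minus_eq)
  with f show ?thesis by simp
qed

lemma self_similar_fixpoint_has_integral:
  assumes fixpoint: "\<And>q x. 0 < x \<Longrightarrow> x \<le> 1 \<Longrightarrow> self_similar_step f q x = f q x"
    and bounded: "\<And>q x. 0 \<le> x \<Longrightarrow> x \<le> 1 \<Longrightarrow> 0 \<le> f q x \<and> f q x \<le> 1"
  shows "(f q has_integral self_similar_integral q) {0..1}"
proof (rule has_integral_squeeze)
  fix e :: real assume "e > 0"
  then obtain n where n: "(3/4::real) ^ n < e"
    using real_arch_pow_inv[of e "3/4"] by auto
  have const: "\<exists>J. \<forall>q. ((self_similar_step ^^ n) (\<lambda>_ _. c) q has_integral J q) {0..1}
                  \<and> \<bar>J q - self_similar_integral q\<bar> \<le> (3/4) ^ n" if "c \<in> {0, 1}" for c :: real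
  proof -
    have "((\<lambda>_. c) has_integral c) {0..1::real}"
      using has_integral_const_real[of c 0 1] by simp
    moreover have "\<bar>c - self_similar_integral q\<bar> \<le> 1" for q
      using that by (auto simp: self_similar_integral_def)
    ultimately show ?thesis
      using self_similar_iterate_has_integral[of "\<lambda>_ _. c" "\<lambda>_. c" 1 n] by simp
  qed
  obtain J0 where J0: "\<And>q. ((self_similar_step ^^ n) (\<lambda>_ _. 0) q has_integral J0 q) {0..1}"
      "\<And>q. \<bar>J0 q - self_similar_integral q\<bar> \<le> (3/4) ^ n"
    using const[of 0] by auto
  obtain J1 where J1: "\<And>q. ((self_similar_step ^^ n) (\<lambda>_ _. 1) q has_integral J1 q) {0..1}"
      "\<And>q. \<bar>J1 q - self_similar_integral q\<bar> \<le> (3/4) ^ n"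
    using const[of 1] by auto
  have "\<bar>J0 q - self_similar_integral q\<bar> < e" "\<bar>J1 q - self_similar_integral q\<bar> < e"
    using J0(2)[of q] J1(2)[of q] n by linarith+
  moreover have "\<forall>x\<in>{0..1}. (self_similar_step ^^ n) (\<lambda>_ _. 0) q x \<le> f q x
                   \<and> f q x \<le> (self_similar_step ^^ n) (\<lambda>_ _. 1) q x"
    using self_similar_fixpoint_bounds[OF fixpoint bounded] by simp
  ultimately show "\<exists>g h i j. (g has_integral i) {0..1} \<and> (h has_integral j) {0..1}
          \<and> \<bar>i - self_similar_integral q\<bar> < e \<and> \<bar>j - self_similar_integral q\<bar> < e
          \<and> (\<forall>x\<in>{0..1}. g x \<le> f q x \<and> f q x \<le> h x)"
    using J0(1)[of q] J1(1)[of q] by blast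
qed

theorem proposition4p4:
  shows "(R has_integral (3/7)) {0..1}"
proof -
  have "(R_xor False has_integral self_similar_integral False) {0..1}"
    using R_xor_bounds by (intro self_similar_fixpoint_has_integral R_xor_self_similar) auto
  then have "(R_xor False has_integral 3/7) {0..1}"
    by (simp add: self_similar_integral_def)
  moreover have "R x = R_xor False x" if "x \<in> {0..1} - {0}" for x
    using that by (simp add: R_def R_xor_def rho_def binary_series_def[abs_def])
  ultimately show ?thesis
    using has_integral_spike_finite[of "{0}"] by blast
qed

end
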